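(* Consider the ride-hailing model in the context and a demand vector $\bm b^C$ with $0\le b^C_i\le b_i$. Suppose $\mathcal{CV}(\bm b^C)$ has an optimal solution whose Lagrange multipliers (waiting times) $\bm w^C$ of the capacity constraints satisfy $\bm w^C=\bm 0$. Then hiding demand from CVs is never profitable: for every $\bm b'$ with $0\le b'_i\le b^C_i$ for all $i$, $\pi(\bm b')\le\pi(\bm b^C)$.
   Context: Model. There are $L$ regions $\{1,\dots,L\}$. For regions $i,j$, $b_{ij}\ge0$ is the customer rate from $i$ to $j$; $b_i=\sum_j b_{ij}$ (assumed $>0$), $q_{ij}=b_{ij}/b_i$. Travel times satisfy $t_{ij}>0$ for $i\ne j$, $t_{ii}=0$. Constants: $p>0$, $c\ge0$, $R\in(0,1)$, CV fleet mass $N>0$. For $i,\alpha$: $\tau^{dr}_{i\alpha}=t_{i\alpha}+\sum_j q_{\alpha j}t_{\alpha j}$, $r^C_{i\alpha}=p(1-R)\sum_j q_{\alpha j}t_{\alpha j}-c\tau^{dr}_{i\alpha}$, $r^{C2P}_{i\alpha}=pR\sum_j q_{\alpha j}t_{\alpha j}$. A matrix $\bm x\in\mathbb R^{L\times L}_{\ge0}$ satisfies flow balance if $\sum_j(\sum_k x_{kj})q_{ji}=\sum_\alpha x_{i\alpha}$ for all $i$. $\mathcal{CV}(\bm b^C)$: maximize $N\log\sum_{i,\alpha}r^C_{i\alpha}x_{i\alpha}-\sum_{i,\alpha}\tau^{dr}_{i\alpha}x_{i\alpha}$ over $\bm x\ge0$ satisfying flow balance and $\sum_j x_{ji}\le b^C_i$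 for all $i$. $\pi(\bm b^C)=\sum_{i,\alpha}r^{C2P}_{i\alpha}x_{i\alpha}$ for an optimal solution $\bm x$ of $\mathcal{CV}(\bm b^C)$ (the value is the same for all optimal solutions). *)

theory Defs
  imports Complex_Main
begin

(* Regions are the elements of a finite type 'r (L = CARD('r)).
   Matrices indexed by regions are functions 'r \<Rightarrow> 'r \<Rightarrow> real. *)

definition bsum :: "('r::finite \<Rightarrow> 'r \<Rightarrow> real) \<Rightarrow> 'r \<Rightarrow> real" where
  "bsum b i = (\<Sum>j\<in>UNIV. b i j)"

definition qm :: "('r::finite \<Rightarrow> 'r \<Rightarrow> real) \<Rightarrow> 'r \<Rightarrow> 'r \<Rightarrow> real" where
  "qm b i j = b i j / bsum b i"

definition tau_dr :: "('r::finite \<Rightarrow> 'r \<Rightarrow> real) \<Rightarrow> ('r \<Rightarrow> 'r \<Rightarrow> real) \<Rightarrow> 'r \<Rightarrow> 'r \<Rightarrow> real" where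
  "tau_dr b t i a = t i a + (\<Sum>j\<in>UNIV. qm b a j * t a j)"

definition rC :: "('r::finite \<Rightarrow> 'r \<Rightarrow> real) \<Rightarrow> ('r \<Rightarrow> 'r \<Rightarrow> real) \<Rightarrow> real \<Rightarrow> real \<Rightarrow> real
                  \<Rightarrow> 'r \<Rightarrow> 'r \<Rightarrow> real" where
  "rC b t p c R i a = p * (1 - R) * (\<Sum>j\<in>UNIV. qm b a j * t a j) - c * tau_dr b t i a"

definition rC2P :: "('r::finite \<Rightarrow> 'r \<Rightarrow> real) \<Rightarrow> ('r \<Rightarrow> 'r \<Rightarrow> real) \<Rightarrow> real \<Rightarrow> real
                  \<Rightarrow> 'r \<Rightarrow> 'r \<Rightarrow> real" where
  "rC2P b t p R i a = p * R * (\<Sum>j\<in>UNIV. qm b a j * t a j)"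

definition flow_balance :: "('r::finite \<Rightarrow> 'r \<Rightarrow> real) \<Rightarrow> ('r \<Rightarrow> 'r \<Rightarrow> real) \<Rightarrow> bool" where
  "flow_balance b x \<longleftrightarrow>
     (\<forall>i. (\<Sum>j\<in>UNIV. (\<Sum>k\<in>UNIV. x k j) * qm b j i) = (\<Sum>a\<in>UNIV. x i a))"

definition cv_rev :: "('r::finite \<Rightarrow> 'r \<Rightarrow> real) \<Rightarrow> ('r \<Rightarrow> 'r \<Rightarrow> real) \<Rightarrow> real \<Rightarrow> real \<Rightarrow> real
                  \<Rightarrow> ('r \<Rightarrow> 'r \<Rightarrow> real) \<Rightarrow> real" where
  "cv_rev b t p c R x = (\<Sum>i\<in>UNIV. \<Sum>a\<in>UNIV. rC b t p c R i a * x i a)"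

definition cv_time :: "('r::finite \<Rightarrow> 'r \<Rightarrow> real) \<Rightarrow> ('r \<Rightarrow> 'r \<Rightarrow> real) \<Rightarrow> ('r \<Rightarrow> 'r \<Rightarrow> real) \<Rightarrow> real" where
  "cv_time b t x = (\<Sum>i\<in>UNIV. \<Sum>a\<in>UNIV. tau_dr b t i a * x i a)"

(* feasible points of CV(bC); the log in the objective requires positive revenue *)
definition cv_feasible :: "('r::finite \<Rightarrow> 'r \<Rightarrow> real) \<Rightarrow> ('r \<Rightarrow> 'r \<Rightarrow> real) \<Rightarrow> real \<Rightarrow> real \<Rightarrow> real
                  \<Rightarrow> ('r \<Rightarrow> real) \<Rightarrow> ('r \<Rightarrow> 'r \<Rightarrow> real) \<Rightarrow> bool" where
  "cv_feasible b t p c R bC x \<longleftrightarrow>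
     (\<forall>i a. 0 \<le> x i a) \<and> flow_balance b x \<and> (\<forall>i. (\<Sum>j\<in>UNIV. x j i) \<le> bC i)
     \<and> 0 < cv_rev b t p c R x"

definition cv_obj :: "('r::finite \<Rightarrow> 'r \<Rightarrow> real) \<Rightarrow> ('r \<Rightarrow> 'r \<Rightarrow> real) \<Rightarrow> real \<Rightarrow> real \<Rightarrow> real
                  \<Rightarrow> real \<Rightarrow> ('r \<Rightarrow> 'r \<Rightarrow> real) \<Rightarrow> real" where
  "cv_obj b t p c R N x = N * ln (cv_rev b t p c R x) - cv_time b t x"

definition cv_optimal :: "('r::finite \<Rightarrow> 'r \<Rightarrow> real) \<Rightarrow> ('r \<Rightarrow> 'r \<Rightarrow> real) \<Rightarrow> real \<Rightarrow> real \<Rightarrow> real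
                  \<Rightarrow> real \<Rightarrow> ('r \<Rightarrow> real) \<Rightarrow> ('r \<Rightarrow> 'r \<Rightarrow> real) \<Rightarrow> bool" where
  "cv_optimal b t p c R N bC x \<longleftrightarrow>
     cv_feasible b t p c R bC x \<and>
     (\<forall>y. cv_feasible b t p c R bC y \<longrightarrow> cv_obj b t p c R N y \<le> cv_obj b t p c R N x)"

(* KKT / Lagrange multipliers w of the capacity constraints  \<Sum>_j x_ji \<le> bC_i  at the point x:
   w \<ge> 0, complementary slackness, and there are (sign-free) multipliers \<mu> of the
   flow-balance equalities such that the gradient of the Lagrangian w.r.t. x_{k a} is
   \<le> 0, with equality whenever x_{k a} > 0 (multipliers of x \<ge> 0). *)
definition cv_multipliers :: "('r::finite \<Rightarrow> 'r \<Rightarrow> real) \<Rightarrow> ('r \<Rightarrow> 'r \<Rightarrow> real) \<Rightarrow> real \<Rightarrow> real \<Rightarrow> real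
                  \<Rightarrow> real \<Rightarrow> ('r \<Rightarrow> real) \<Rightarrow> ('r \<Rightarrow> 'r \<Rightarrow> real) \<Rightarrow> ('r \<Rightarrow> real) \<Rightarrow> bool" where
  "cv_multipliers b t p c R N bC x w \<longleftrightarrow>
     (\<forall>i. 0 \<le> w i) \<and> (\<forall>i. w i * ((\<Sum>j\<in>UNIV. x j i) - bC i) = 0) \<and>
     (\<exists>\<mu>::'r \<Rightarrow> real. \<forall>k a.
        (let g = N * rC b t p c R k a / cv_rev b t p c R x - tau_dr b t k a
                 + (\<Sum>i\<in>UNIV. \<mu> i * (qm b a i - (if k = i then 1 else 0))) - w a
         in g \<le> 0 \<and> (0 < x k a \<longrightarrow> g = 0)))"

definition pi_val :: "('r::finite \<Rightarrow> 'r \<Rightarrow> real) \<Rightarrow> ('r \<Rightarrow> 'r \<Rightarrow> real) \<Rightarrow> real \<Rightarrow> real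
                  \<Rightarrow> ('r \<Rightarrow> 'r \<Rightarrow> real) \<Rightarrow> real" where
  "pi_val b t p R x = (\<Sum>i\<in>UNIV. \<Sum>a\<in>UNIV. rC2P b t p R i a * x i a)"

end

theory Submission
  imports Defs
begin

(* With zero waiting times the KKT conditions at x0 are those of the problem without
   capacity constraints. Pairing the stationarity inequalities with any flow-balanced y >= 0
   eliminates the flow-balance multipliers and gives N rev(y) / rev(x0) <= time(y), with
   equality at y = x0 by complementary slackness, so time(x0) = N. An optimum x' of CV(b')
   has time(x') <= N, since otherwise scaling it down by N / time(x') would improve the
   objective; hence rev(x') <= rev(x0). Finally rC + c tau_dr = ((1 - R) / R) rC2P, so pi is
   an increasing combination of revenue and time. *)

lemma pi_val_eq_rev_time:
  fixes b t :: "'r::finite \<Rightarrow> 'r \<Rightarrow> real"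
  shows "(1 - R) * pi_val b t p R x = R * (cv_rev b t p c R x + c * cv_time b t x)"
proof -
  have "R * (cv_rev b t p c R x + c * cv_time b t x)
      = (\<Sum>i\<in>UNIV. \<Sum>a\<in>UNIV. R * (rC b t p c R i a + c * tau_dr b t i a) * x i a)"
    unfolding cv_rev_def cv_time_def
    by (simp add: sum_distrib_left sum.distrib[symmetric] algebra_simps)
  also have "\<dots> = (\<Sum>i\<in>UNIV. \<Sum>a\<in>UNIV. (1 - R) * (rC2P b t p R i a * x i a))"
    by (intro sum.cong refl) (simp add: rC_def rC2P_def algebra_simps)
  also have "\<dots> = (1 - R) * pi_val b t p R x"
    unfolding pi_val_def by (simp add: sum_distrib_left)
  finally show ?thesis by simp
qed

lemma pi_val_mono:
  fixes b t :: "'r::finite \<Rightarrow> 'r \<Rightarrow> real"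
  assumes "0 < R" "R < 1" "0 \<le> c"
    and "cv_rev b t p c R y \<le> cv_rev b t p c R x" "cv_time b t y \<le> cv_time b t x"
  shows "pi_val b t p R y \<le> pi_val b t p R x"
proof -
  have "(1 - R) * pi_val b t p R y \<le> (1 - R) * pi_val b t p R x"
    unfolding pi_val_eq_rev_time[where c = c]
    using assms by (intro mult_left_mono add_mono) auto
  then show ?thesis
    using \<open>R < 1\<close> by simp
qed

lemma flow_balance_multiplier_sum_eq_0:
  fixes b y :: "'r::finite \<Rightarrow> 'r \<Rightarrow> real"
  assumes "flow_balance b y"
  shows "(\<Sum>k\<in>UNIV. \<Sum>a\<in>UNIV. (\<Sum>i\<in>UNIV. \<mu> i * (qm b a i - (if k = i then 1 else 0))) * y k a) = 0"
proof -
  have delta: "(\<Sum>i\<in>UNIV. \<mu> i * (qm b a i - (if k = i then 1 else 0)))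
      = (\<Sum>i\<in>UNIV. \<mu> i * qm b a i) - \<mu> k" for k a
    by (simp add: right_diff_distrib sum_subtractf of_bool_def[symmetric])
  have "(\<Sum>k\<in>UNIV. \<Sum>a\<in>UNIV. (\<Sum>i\<in>UNIV. \<mu> i * (qm b a i - (if k = i then 1 else 0))) * y k a)
      = (\<Sum>k\<in>UNIV. \<Sum>a\<in>UNIV. \<Sum>i\<in>UNIV. \<mu> i * qm b a i * y k a) - (\<Sum>k\<in>UNIV. \<Sum>a\<in>UNIV. \<mu> k * y k a)"
    by (simp only: delta left_diff_distrib sum_distrib_right sum_subtractf)
  also have "(\<Sum>k\<in>UNIV. \<Sum>a\<in>UNIV. \<Sum>i\<in>UNIV. \<mu> i * qm b a i * y k a)
      = (\<Sum>a\<in>UNIV. \<Sum>k\<in>UNIV. \<Sum>i\<in>UNIV. \<mu> i * qm b a i * y k a)"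
    by (rule sum.swap)
  also have "\<dots> = (\<Sum>a\<in>UNIV. \<Sum>i\<in>UNIV. \<Sum>k\<in>UNIV. \<mu> i * qm b a i * y k a)"
    by (intro sum.cong refl sum.swap)
  also have "\<dots> = (\<Sum>i\<in>UNIV. \<Sum>a\<in>UNIV. \<Sum>k\<in>UNIV. \<mu> i * qm b a i * y k a)"
    by (rule sum.swap)
  also have "\<dots> = (\<Sum>i\<in>UNIV. \<mu> i * (\<Sum>a\<in>UNIV. (\<Sum>k\<in>UNIV. y k a) * qm b a i))"
    by (simp add: sum_distrib_left sum_distrib_right mult_ac)
  also have "\<dots> = (\<Sum>k\<in>UNIV. \<Sum>a\<in>UNIV. \<mu> k * y k a)"
    using assms by (simp add: flow_balance_def sum_distrib_left)
  finally show ?thesis by simp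
qed

lemma lagrangian_gradient_pairing:
  fixes b t y :: "'r::finite \<Rightarrow> 'r \<Rightarrow> real"
  assumes "flow_balance b y"
  shows "(\<Sum>k\<in>UNIV. \<Sum>a\<in>UNIV. (N * rC b t p c R k a / r - tau_dr b t k a
            + (\<Sum>i\<in>UNIV. \<mu> i * (qm b a i - (if k = i then 1 else 0)))) * y k a)
       = N * cv_rev b t p c R y / r - cv_time b t y"
proof -
  have "(\<Sum>k\<in>UNIV. \<Sum>a\<in>UNIV. (N * rC b t p c R k a / r - tau_dr b t k a
            + (\<Sum>i\<in>UNIV. \<mu> i * (qm b a i - (if k = i then 1 else 0)))) * y k a)
      = N / r * cv_rev b t p c R y - cv_time b t y
        + (\<Sum>k\<in>UNIV. \<Sum>a\<in>UNIV. (\<Sum>i\<in>UNIV. \<mu> i * (qm b a i - (if k = i then 1 else 0))) * y k a)"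
    unfolding cv_rev_def cv_time_def
    by (simp add: sum.distrib sum_subtractf sum_distrib_left algebra_simps)
  then show ?thesis
    using flow_balance_multiplier_sum_eq_0[OF assms] by simp
qed

lemma cv_multipliers_zero:
  fixes b t x :: "'r::finite \<Rightarrow> 'r \<Rightarrow> real"
  assumes x_feasible: "cv_feasible b t p c R bC x"
    and multipliers: "cv_multipliers b t p c R N bC x (\<lambda>_. 0)"
  shows cv_multipliers_zero_cv_time_eq: "cv_time b t x = N"
    and cv_multipliers_zero_cv_rev_le:
      "\<And>y. (\<forall>i a. 0 \<le> y i a) \<Longrightarrow> flow_balance b y
        \<Longrightarrow> N * cv_rev b t p c R y / cv_rev b t p c R x \<le> cv_time b t y"
proof -
  define r where "r = cv_rev b t p c R x"
  obtain \<mu> where stationary: "\<forall>k a. let g = N * rC b t p c R k a / r - tau_dr b t k a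
      + (\<Sum>i\<in>UNIV. \<mu> i * (qm b a i - (if k = i then 1 else 0))) - 0 in g \<le> 0 \<and> (0 < x k a \<longrightarrow> g = 0)"
    using multipliers unfolding cv_multipliers_def r_def by blast
  define g where "g k a = N * rC b t p c R k a / r - tau_dr b t k a
      + (\<Sum>i\<in>UNIV. \<mu> i * (qm b a i - (if k = i then 1 else 0)))" for k a
  have g_nonpos: "g k a \<le> 0" and g_slack: "0 < x k a \<Longrightarrow> g k a = 0" for k a
    using stationary unfolding g_def Let_def by simp_all
  have pairing: "(\<Sum>k\<in>UNIV. \<Sum>a\<in>UNIV. g k a * y k a) = N * cv_rev b t p c R y / r - cv_time b t y"
    if "flow_balance b y" for y
    unfolding g_def using lagrangian_gradient_pairing[OF that] .
  have "(\<Sum>k\<in>UNIV. \<Sum>a\<in>UNIV. g k a * x k a) = 0"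
    using x_feasible g_slack unfolding cv_feasible_def
    by (intro sum.neutral ballI) (metis mult_eq_0_iff order_le_less)
  moreover have "0 < r"
    using x_feasible unfolding cv_feasible_def r_def by blast
  ultimately show "cv_time b t x = N"
    using x_feasible pairing[of x] unfolding cv_feasible_def r_def by simp
  fix y assume "\<forall>i a. 0 \<le> y i a" "flow_balance b y"
  then have "(\<Sum>k\<in>UNIV. \<Sum>a\<in>UNIV. g k a * y k a) \<le> 0"
    by (intro sum_nonpos) (simp add: mult_nonpos_nonneg g_nonpos)
  then show "N * cv_rev b t p c R y / cv_rev b t p c R x \<le> cv_time b t y"
    using pairing[OF \<open>flow_balance b y\<close>] unfolding r_def by simp
qed

lemma cv_feasible_scale:
  fixes b t x :: "'r::finite \<Rightarrow> 'r \<Rightarrow> real"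
  assumes "cv_feasible b t p c R bC x" "0 < s" "s \<le> 1"
  shows "cv_feasible b t p c R bC (\<lambda>i a. s * x i a)"
  unfolding cv_feasible_def
proof (intro conjI allI)
  fix i
  have "(\<Sum>j\<in>UNIV. s * x j i) \<le> (\<Sum>j\<in>UNIV. x j i)"
    using assms unfolding cv_feasible_def by (intro sum_mono) (simp add: mult_left_le_one_le)
  also have "\<dots> \<le> bC i"
    using assms unfolding cv_feasible_def by blast
  finally show "(\<Sum>j\<in>UNIV. s * x j i) \<le> bC i" .
next
  show "flow_balance b (\<lambda>i a. s * x i a)"
    using assms unfolding cv_feasible_def flow_balance_def
    by (simp add: sum_distrib_left[symmetric] mult.assoc)
qed (use assms in \<open>auto simp: cv_feasible_def cv_rev_def sum_distrib_left[symmetric] mult.left_commute\<close>)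

lemma cv_obj_scale:
  fixes b t x :: "'r::finite \<Rightarrow> 'r \<Rightarrow> real"
  assumes "0 < s" "0 < cv_rev b t p c R x"
  shows "cv_obj b t p c R N (\<lambda>i a. s * x i a)
       = cv_obj b t p c R N x + N * ln s - (s - 1) * cv_time b t x"
proof -
  have "cv_rev b t p c R (\<lambda>i a. s * x i a) = s * cv_rev b t p c R x"
    unfolding cv_rev_def by (simp add: sum_distrib_left mult.left_commute)
  moreover have "cv_time b t (\<lambda>i a. s * x i a) = s * cv_time b t x"
    unfolding cv_time_def by (simp add: sum_distrib_left mult.left_commute)
  ultimately show ?thesis
    using assms unfolding cv_obj_def by (simp add: ln_mult algebra_simps)
qed

lemma cv_optimal_cv_time_le:
  fixes b t x :: "'r::finite \<Rightarrow> 'r \<Rightarrow> real"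
  assumes "0 < N" "cv_optimal b t p c R N bC x"
  shows "cv_time b t x \<le> N"
proof (rule ccontr)
  define T where "T = cv_time b t x"
  assume "\<not> cv_time b t x \<le> N"
  then have "N < T" unfolding T_def by simp
  define s where "s = N / T"
  have "0 < s" "s \<le> 1"
    using \<open>0 < N\<close> \<open>N < T\<close> unfolding s_def by auto
  have x_feasible: "cv_feasible b t p c R bC x"
    using assms(2) unfolding cv_optimal_def by blast
  then have "cv_obj b t p c R N (\<lambda>i a. s * x i a) \<le> cv_obj b t p c R N x"
    using assms(2) cv_feasible_scale[OF _ \<open>0 < s\<close> \<open>s \<le> 1\<close>] unfolding cv_optimal_def by blast
  moreover have "cv_obj b t p c R N (\<lambda>i a. s * x i a) = cv_obj b t p c R N x + N * ln s - (s - 1) * T"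
    using cv_obj_scale[OF \<open>0 < s\<close>] x_feasible unfolding cv_feasible_def T_def by blast
  moreover have "(s - 1) * T = N - T"
    using \<open>N < T\<close> \<open>0 < N\<close> unfolding s_def by (simp add: field_simps)
  ultimately have "N * ln s \<le> N - T" by simp
  moreover have "ln T - ln N < (T - N) / N"
    using ln_diff_less[of T N] \<open>0 < N\<close> \<open>N < T\<close> by simp
  then have "N - T < N * ln s"
    using \<open>0 < N\<close> \<open>N < T\<close> unfolding s_def by (simp add: ln_div field_simps)
  ultimately show False by simp
qed

theorem proposition3:
  fixes b t :: "'r::finite \<Rightarrow> 'r \<Rightarrow> real"
    and p c R N :: real
    and bC b' :: "'r \<Rightarrow> real"
    and x0 :: "'r \<Rightarrow> 'r \<Rightarrow> real"
  assumes b_nonneg: "\<forall>i j. 0 \<le> b i j"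
    and b_pos: "\<forall>i. 0 < bsum b i"
    and t_pos: "\<forall>i j. i \<noteq> j \<longrightarrow> 0 < t i j"
    and t_diag: "\<forall>i. t i i = 0"
    and p_pos: "0 < p" and c_nonneg: "0 \<le> c" and R_pos: "0 < R" and R_lt1: "R < 1"
    and N_pos: "0 < N"
    and bC_bounds: "\<forall>i. 0 \<le> bC i \<and> bC i \<le> bsum b i"
    and x0_opt: "cv_optimal b t p c R N bC x0"
    and w_zero: "cv_multipliers b t p c R N bC x0 (\<lambda>_. 0)"
    and b'_bounds: "\<forall>i. 0 \<le> b' i \<and> b' i \<le> bC i"
  shows "\<forall>x'. cv_optimal b t p c R N b' x' \<longrightarrow> pi_val b t p R x' \<le> pi_val b t p R x0"
proof (intro allI impI)
  fix x' assume x'_opt: "cv_optimal b t p c R N b' x'"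
  have x0_feasible: "cv_feasible b t p c R bC x0" and x'_feasible: "cv_feasible b t p c R b' x'"
    using x0_opt x'_opt unfolding cv_optimal_def by blast+
  have time_x': "cv_time b t x' \<le> N"
    using cv_optimal_cv_time_le[OF N_pos x'_opt] .
  have time_x0: "cv_time b t x0 = N"
    using cv_multipliers_zero_cv_time_eq[OF x0_feasible w_zero] .
  have "N * cv_rev b t p c R x' / cv_rev b t p c R x0 \<le> cv_time b t x'"
    using x'_feasible unfolding cv_feasible_def
    by (intro cv_multipliers_zero_cv_rev_le[OF x0_feasible w_zero]) simp_all
  also note time_x'
  finally have rev_le: "cv_rev b t p c R x' \<le> cv_rev b t p c R x0"
    using N_pos x0_feasible unfolding cv_feasible_def by (simp add: field_simps)
  show "pi_val b t p R x' \<le> pi_val b t p R x0"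
    using pi_val_mono[OF R_pos R_lt1 c_nonneg rev_le] time_x' time_x0 by simp
qed

end
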